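(* Let $q\ge2$ be even and $d\ge q$. Let $f$ be a density on $\mathbb{R}^d$ with mode $\boldsymbol\theta$, sufficiently smooth, whose $(q+1)$-st order term of the Taylor expansion around $\boldsymbol\theta$ is of the form $\prod_{i=1}^{q+1}\mathbf a_i^\top(\mathbf x-\boldsymbol\theta)$, where $\mathbf a_1,\ldots,\mathbf a_{q+1}$ span a $q$-dimensional subspace of $\mathbb{R}^d$, and suppose $\sum_{i=1}^{q+1}s_i\mathbf a_i=\mathbf 0$ for some coefficients with $s_1s_2\cdots s_{q+1}\neq0$. Then there is a choice of $\mathrm Q$ for which the asymptotic bias is equal to zero, i.e. $\nabla(\nabla^\top\mathrm Q\nabla)^{q/2}f(\boldsymbol\theta)=\mathbf 0$.
   Context: Setting: $\mathrm A=\{Hf(\boldsymbol\theta)\}^{-1}$ is assumed to exist. For a radial $q$-th order kernel $K(\mathbf x)=G(\|\mathbf x\|)$ and a $d\times d$ matrix $\mathrm P$ with $|\det\mathrm P|=1$, the elliptic kernel is $K_{\mathrm P}(\mathbf x)=K(\mathrm P\mathbf x)$ and $\mathrm Q=\mathrm P^{-1}\mathrm P^{-\top}$ (symmetric positive definite). The asymptotic bias of the kernel mode estimator with kernel $K_{\mathrm P}$ and bandwidth $h_n$ is $-\frac{\pi^{d/2}h_n^q}{2^{q-1}\Gamma(\frac{d+q}{2})\Gamma(\frac q2+1)}B_{d,q}(G)\,\mathrm A\,\nabla(\nabla^\top\mathrm Q\nabla)^{q/2}f(\boldsymbol\theta)$ with $B_{d,q}(G)=\int_0^\infty x^{d-1+q}G(x)dx\ne0$,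 so it vanishes iff $\nabla(\nabla^\top\mathrm Q\nabla)^{q/2}f(\boldsymbol\theta)=\mathbf 0$ (a quantity depending only on the $(q+1)$-st order Taylor term of $f$ at $\boldsymbol\theta$). *)

theory Defs
  imports "HOL-Analysis.Analysis"
begin

definition pdiff :: "'n::finite \<Rightarrow> (real^'n \<Rightarrow> real) \<Rightarrow> real^'n \<Rightarrow> real" where
  "pdiff i g x = deriv (\<lambda>t. g (x + t *\<^sub>R axis i 1)) 0"

fun ipdiff :: "'n::finite list \<Rightarrow> (real^'n \<Rightarrow> real) \<Rightarrow> real^'n \<Rightarrow> real" where
  "ipdiff [] g = g"
| "ipdiff (i # js) g = pdiff i (ipdiff js g)"

definition Ck_partials :: "nat \<Rightarrow> (real^'n::finite \<Rightarrow> real) \<Rightarrow> bool" where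
  "Ck_partials k g \<longleftrightarrow>
     (\<forall>js. length js < k \<longrightarrow> (\<forall>i x.
        ((\<lambda>t. ipdiff js g (x + t *\<^sub>R axis i 1)) has_real_derivative ipdiff (i # js) g x) (at 0)))
   \<and> (\<forall>js. length js \<le> k \<longrightarrow> continuous_on UNIV (ipdiff js g))"

definition hessian :: "(real^'n::finite \<Rightarrow> real) \<Rightarrow> real^'n \<Rightarrow> real^'n^'n" where
  "hessian g x = (\<chi> i j. pdiff i (pdiff j g) x)"

definition QLap :: "real^'n^'n \<Rightarrow> (real^'n::finite \<Rightarrow> real) \<Rightarrow> real^'n \<Rightarrow> real" where
  "QLap Q g x = (\<Sum>i\<in>UNIV. \<Sum>j\<in>UNIV. Q $ i $ j * pdiff i (pdiff j g) x)"

definition bias_vec :: "real^'n^'n \<Rightarrow> nat \<Rightarrow> (real^'n::finite \<Rightarrow> real) \<Rightarrow> real^'n \<Rightarrow> real^'n" where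
  "bias_vec Q q g x = (\<chi> k. pdiff k ((QLap Q ^^ (q div 2)) g) x)"

end

theory Submission
  imports Defs
begin

text \<open>By Schwarz's theorem the partial derivatives of order \<open>q + 1\<close> of \<open>f\<close> at \<open>\<theta>\<close> form a
  symmetric tensor, and a symmetric tensor is determined by its homogeneous form (polarisation);
  so the Taylor hypothesis identifies it with the symmetrisation of \<open>a\<^sub>1 \<otimes> \<dots> \<otimes> a\<^sub>q\<^sub>+\<^sub>1\<close>.
  The \<open>k\<close>-th component of \<open>\<nabla>(\<nabla>\<^sup>T Q \<nabla>)\<^bsup>q/2\<^esup> f(\<theta>)\<close> contracts all but one slot of this tensor with
  \<open>Q \<otimes> \<dots> \<otimes> Q\<close>, a sum over perfect matchings of \<open>q\<close> of the indices. If
  \<open>a\<^sub>u\<^sup>T Q a\<^sub>v = c / (s\<^sub>u s\<^sub>v)\<close> for all \<open>u \<noteq> v\<close>, every matching contributes the same amount and the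
  component becomes a multiple of \<open>\<Sum>\<^sub>i s\<^sub>i a\<^sub>i = 0\<close>.
  Such a \<open>Q = M M\<^sup>T\<close> with \<open>\<bar>det M\<bar> = 1\<close> exists: the vectors \<open>s\<^sub>u a\<^sub>u\<close> span a \<open>q\<close>-dimensional space with
  the single relation \<open>\<Sum>\<^sub>u s\<^sub>u a\<^sub>u = 0\<close>, so an injective linear map sends them to the vertices of a
  regular simplex centred at the origin, whose pairwise inner products are all equal.\<close>

section \<open>Symmetric tensors indexed by lists\<close>

lemma sum_length_Suc:
  "(\<Sum>js | length js = Suc n. F js) = (\<Sum>i\<in>UNIV. \<Sum>js | length js = n. F (i # js :: 'n::finite list))"
proof -
  have "{js :: 'n list. length js = Suc n} = (\<lambda>(js, i). i # js) ` ({js. length js = n} \<times> UNIV)"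
    using lists_length_Suc_eq[of UNIV n] by simp
  then have "(\<Sum>js | length js = Suc n. F js) = (\<Sum>(js, i) \<in> {js. length js = n} \<times> UNIV. F (i # js))"
    by (simp add: sum.reindex inj_on_def split_def)
  then show ?thesis
    by (simp add: sum.cartesian_product[symmetric] finite_list_length sum.swap[of _ UNIV])
qed

definition symmetric_tensor :: "nat \<Rightarrow> ('n list \<Rightarrow> 'b) \<Rightarrow> bool" where
  "symmetric_tensor n D \<longleftrightarrow> (\<forall>xs ys. length xs = n \<longrightarrow> mset xs = mset ys \<longrightarrow> D xs = D ys)"

lemma symmetric_tensor_Cons: "symmetric_tensor (Suc n) D \<Longrightarrow> symmetric_tensor n (\<lambda>js. D (i # js))"
  unfolding symmetric_tensor_def by auto

lemma symmetric_tensor_diff: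
  "symmetric_tensor n D \<Longrightarrow> symmetric_tensor n E \<Longrightarrow> symmetric_tensor n (\<lambda>js. D js - E js)"
  unfolding symmetric_tensor_def by metis

lemma symmetric_tensor_swap:
  "symmetric_tensor (Suc (Suc n)) D \<Longrightarrow> length js = n \<Longrightarrow> D (i # j # js) = D (j # i # js)"
  unfolding symmetric_tensor_def by (simp add: add_mset_commute)

definition coord_prod :: "real^'n::finite \<Rightarrow> 'n list \<Rightarrow> real" where
  "coord_prod x js = (\<Prod>j\<leftarrow>js. x $ j)"

lemma coord_prod_simps [simp]:
  "coord_prod x [] = 1" "coord_prod x (j # js) = x $ j * coord_prod x js"
  by (simp_all add: coord_prod_def)

fun coord_prod_pdiff :: "real^'n::finite \<Rightarrow> 'n \<Rightarrow> 'n list \<Rightarrow> real" where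
  "coord_prod_pdiff x i [] = 0"
| "coord_prod_pdiff x i (j # js) = (if j = i then coord_prod x js else 0) + x $ j * coord_prod_pdiff x i js"

lemma has_real_derivative_coord_prod:
  "((\<lambda>t. coord_prod (x + t *\<^sub>R axis i 1) js) has_real_derivative coord_prod_pdiff x i js) (at 0)"
proof (induction js)
  case (Cons j js)
  have "((\<lambda>t. (x + t *\<^sub>R axis i 1) $ j) has_real_derivative (if j = i then 1 else 0)) (at 0)"
    by (auto intro!: derivative_eq_intros simp: axis_def)
  from DERIV_mult[OF this Cons.IH] show ?case
    unfolding coord_prod_simps coord_prod_pdiff.simps by (rule DERIV_cong) simp
qed simp

lemma sum_coord_prod_pdiff:
  assumes "symmetric_tensor (Suc n) D"
  shows "(\<Sum>js | length js = Suc n. D js * coord_prod_pdiff x i js)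
       = Suc n * (\<Sum>js | length js = n. D (i # js) * coord_prod x js)"
  using assms
proof (induction n arbitrary: D)
  case 0
  show ?case by (simp add: sum_length_Suc if_distrib[of "\<lambda>c. _ * c"] cong: if_cong)
next
  case (Suc n)
  let ?S = "\<lambda>E m. \<Sum>js | length js = m. E js * coord_prod x js"
  have IH: "(\<Sum>js | length js = Suc n. D (j # js) * coord_prod_pdiff x i js)
      = Suc n * ?S (\<lambda>js. D (i # j # js)) n" for j
  proof -
    have "?S (\<lambda>js. D (j # i # js)) n = ?S (\<lambda>js. D (i # j # js)) n"
      using symmetric_tensor_swap[OF Suc.prems] by (intro sum.cong) auto
    then show ?thesis using Suc.IH[OF symmetric_tensor_Cons[OF Suc.prems]] by simp
  qed
  have "(\<Sum>js | length js = Suc (Suc n). D js * coord_prod_pdiff x i js)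
      = (\<Sum>j\<in>UNIV. \<Sum>js | length js = Suc n. D (j # js) * (if j = i then coord_prod x js else 0))
      + (\<Sum>j\<in>UNIV. x $ j * (\<Sum>js | length js = Suc n. D (j # js) * coord_prod_pdiff x i js))"
    by (simp add: sum_length_Suc[of _ "Suc n"] algebra_simps sum.distrib sum_distrib_left)
  also have "(\<Sum>j\<in>UNIV. \<Sum>js | length js = Suc n. D (j # js) * (if j = i then coord_prod x js else 0))
      = ?S (\<lambda>js. D (i # js)) (Suc n)"
    by (subst sum.swap) (simp add: if_distrib[of "\<lambda>c. _ * c"] cong: if_cong)
  also have "(\<Sum>j\<in>UNIV. x $ j * (\<Sum>js | length js = Suc n. D (j # js) * coord_prod_pdiff x i js))
      = Suc n * ?S (\<lambda>js. D (i # js)) (Suc n)"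
    unfolding IH by (simp add: sum_length_Suc[of _ n] sum_distrib_left algebra_simps)
  finally show ?case by (simp add: algebra_simps)
qed

text \<open>Polarisation: differentiating the form of \<open>D\<close> in direction \<open>i\<close> gives \<open>n + 1\<close> times
  the form of the slice \<open>D (i # _)\<close>, which is again symmetric.\<close>

lemma symmetric_tensor_eq_0:
  assumes "symmetric_tensor n D" "\<And>x. (\<Sum>js | length js = n. D js * coord_prod x js) = 0"
    and "length js = n"
  shows "D js = 0"
  using assms
proof (induction n arbitrary: D js)
  case 0
  then show ?case using "0.prems"(2)[of 0] by simp
next
  case (Suc n)
  then obtain i js' where js: "js = i # js'" "length js' = n"
    by (cases js) auto
  have "(\<Sum>ks | length ks = n. D (i # ks) * coord_prod x ks) = 0" for x
  proof -
    have "((\<lambda>t. \<Sum>ks | length ks = Suc n. D ks * coord_prod (x + t *\<^sub>R axis i 1) ks)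
        has_real_derivative (\<Sum>ks | length ks = Suc n. D ks * coord_prod_pdiff x i ks)) (at 0)"
      by (intro DERIV_sum DERIV_cmult has_real_derivative_coord_prod)
    moreover have "(\<lambda>t. \<Sum>ks | length ks = Suc n. D ks * coord_prod (x + t *\<^sub>R axis i 1) ks) = (\<lambda>t. 0)"
      using Suc.prems(2) by simp
    ultimately have "(\<Sum>ks | length ks = Suc n. D ks * coord_prod_pdiff x i ks) = 0"
      using DERIV_const DERIV_unique by metis
    then show ?thesis
      using sum_coord_prod_pdiff[OF Suc.prems(1)] by simp
  qed
  from Suc.IH[OF symmetric_tensor_Cons[OF Suc.prems(1)] this js(2)] show ?case
    by (simp add: js)
qed

lemma mset_eq_imp_eq_if_swap_invariant:
  fixes F :: "'a list \<Rightarrow> 'b" and op :: "'a \<Rightarrow> 'b \<Rightarrow> 'b"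
  assumes Cons_eq: "\<And>a xs. F (a # xs) = op a (F xs)"
    and swap: "\<And>a b xs. length xs + 2 \<le> N \<Longrightarrow> F (a # b # xs) = F (b # a # xs)"
  shows "mset xs = mset ys \<Longrightarrow> length xs \<le> N \<Longrightarrow> F xs = F ys"
proof (induction xs arbitrary: ys)
  case (Cons x xs)
  have move: "F (zs @ x # ws) = F (x # zs @ ws)" if "length (zs @ x # ws) \<le> N" for zs ws
    using that
  proof (induction zs)
    case (Cons z zs)
    then have "F ((z # zs) @ x # ws) = F (z # x # zs @ ws)"
      by (simp add: Cons_eq)
    also have "\<dots> = F (x # z # zs @ ws)"
      using Cons.prems by (intro swap) simp
    finally show ?case by simp
  qed simp
  obtain ys1 ys2 where ys: "ys = ys1 @ x # ys2"
    using Cons.prems(1) by (metis list.set_intros(1) set_mset_mset split_list)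
  have "F (x # xs) = op x (F (ys1 @ ys2))"
    using Cons.IH[of "ys1 @ ys2"] Cons.prems ys by (simp add: Cons_eq)
  also have "\<dots> = F ys"
    using Cons.prems ys by (simp add: move Cons_eq flip: size_mset)
  finally show ?case .
qed simp

text \<open>\<open>sym_prod a I js\<close> sums \<open>\<Prod>p. a (\<sigma> p) $ (js ! p)\<close> over the bijections \<open>\<sigma>\<close> from the positions
  of \<open>js\<close> onto \<open>I\<close>; it is the symmetric coefficient tensor of the form
  \<open>h \<mapsto> fact (card I) * (\<Prod>i\<in>I. a i \<bullet> h)\<close>.\<close>

fun sym_prod :: "(nat \<Rightarrow> real^'n::finite) \<Rightarrow> nat set \<Rightarrow> 'n list \<Rightarrow> real" where
  "sym_prod a I [] = 1"
| "sym_prod a I (j # js) = (\<Sum>i\<in>I. a i $ j * sym_prod a (I - {i}) js)"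

lemma sym_prod_swap: "sym_prod a I (j # k # js) = sym_prod a I (k # j # js)"
proof (cases "finite I")
  case True
  have "sym_prod a I (j # k # js)
      = (\<Sum>i\<in>I. \<Sum>i'\<in>I - {i}. a i $ j * a i' $ k * sym_prod a (I - {i, i'}) js)"
    by (simp add: sum_distrib_left mult_ac insert_commute Diff_insert2[symmetric])
  also have "\<dots> = (\<Sum>i'\<in>I. \<Sum>i\<in>I - {i'}. a i $ j * a i' $ k * sym_prod a (I - {i, i'}) js)"
    using sum.swap_restrict[OF True True, of _ "\<lambda>i i'. i \<noteq> i'"] by (simp add: set_diff_eq eq_commute)
  also have "\<dots> = sym_prod a I (k # j # js)"
    by (simp add: sum_distrib_left mult_ac insert_commute Diff_insert2[symmetric])
  finally show ?thesis .
qed simp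

lemma symmetric_tensor_sym_prod: "symmetric_tensor n (sym_prod a I)"
  unfolding symmetric_tensor_def
proof (intro allI impI)
  fix xs ys :: "'a list"
  assume "mset xs = mset ys"
  have "(\<lambda>I. sym_prod a I xs) = (\<lambda>I. sym_prod a I ys)"
  proof (rule mset_eq_imp_eq_if_swap_invariant[where F = "\<lambda>js I. sym_prod a I js" and N = "length xs"])
    show "(\<lambda>I. sym_prod a I (j # k # js)) = (\<lambda>I. sym_prod a I (k # j # js))" for j k js
      by (simp only: sym_prod_swap)
  qed (use \<open>mset xs = mset ys\<close> in simp_all)
  then show "sym_prod a I xs = sym_prod a I ys" by metis
qed

lemma sym_prod_form:
  assumes "finite I" "card I = n"
  shows "(\<Sum>js | length js = n. coord_prod h js * sym_prod a I js) = fact n * (\<Prod>i\<in>I. a i \<bullet> h)"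
  using assms
proof (induction n arbitrary: I)
  case (Suc n)
  have IH: "(\<Sum>js | length js = n. coord_prod h js * sym_prod a (I - {i}) js)
      = fact n * (\<Prod>k\<in>I - {i}. a k \<bullet> h)" if "i \<in> I" for i
    using Suc.IH[of "I - {i}"] Suc.prems that by simp
  have "(\<Sum>js | length js = Suc n. coord_prod h js * sym_prod a I js)
      = (\<Sum>i\<in>I. (\<Sum>j\<in>UNIV. a i $ j * h $ j)
           * (\<Sum>js | length js = n. coord_prod h js * sym_prod a (I - {i}) js))"
    unfolding sum_product
    by (simp add: sum_length_Suc sum_distrib_left mult_ac sum.swap[of _ "{js. length js = n}" I]
        sum.swap[of _ UNIV I])
  also have "\<dots> = (\<Sum>i\<in>I. fact n * (\<Prod>k\<in>I. a k \<bullet> h))"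
    using Suc.prems(1) by (intro sum.cong) (simp_all add: IH inner_vec_def prod.remove)
  also have "\<dots> = fact (Suc n) * (\<Prod>k\<in>I. a k \<bullet> h)"
    using Suc.prems by simp
  finally show ?case .
qed simp

text \<open>The entry of \<open>Q \<otimes> \<dots> \<otimes> Q\<close> at a multi-index of even length; odd lengths never occur.\<close>

fun tensor_power_entry :: "real^'n::finite^'n \<Rightarrow> 'n list \<Rightarrow> real" where
  "tensor_power_entry Q (i # j # js) = Q $ i $ j * tensor_power_entry Q js"
| "tensor_power_entry Q _ = 1"

lemma contract_sym_prod:
  assumes "\<And>u v. u \<in> J \<Longrightarrow> v \<in> J \<Longrightarrow> u \<noteq> v \<Longrightarrow> a u \<bullet> (Q *v a v) = c * w u * w v"
    and "finite J" "card J = 2 * r"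
  shows "(\<Sum>js | length js = 2 * r. tensor_power_entry Q js * sym_prod a J js)
       = c ^ r * fact (2 * r) * (\<Prod>u\<in>J. w u)"
  using assms
proof (induction r arbitrary: J)
  case (Suc r)
  let ?S = "\<lambda>K. \<Sum>js | length js = 2 * r. tensor_power_entry Q js * sym_prod a K js"
  have IH: "?S (J - {u} - {v}) = c ^ r * fact (2 * r) * (\<Prod>x\<in>J - {u} - {v}. w x)"
    if "u \<in> J" "v \<in> J - {u}" for u v
    using Suc.prems that by (intro Suc.IH) (auto simp: card_Diff_singleton_if)
  have "(\<Sum>js | length js = 2 * Suc r. tensor_power_entry Q js * sym_prod a J js)
      = (\<Sum>i\<in>UNIV. \<Sum>j\<in>UNIV. Q $ i $ j *
          (\<Sum>u\<in>J. \<Sum>v\<in>J - {u}. a u $ i * a v $ j * ?S (J - {u} - {v})))"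
    by (simp add: sum_length_Suc sum_distrib_left sum.swap[of _ "{js. length js = _}"] mult_ac)
  also have "\<dots> = (\<Sum>u\<in>J. \<Sum>v\<in>J - {u}. (\<Sum>i\<in>UNIV. \<Sum>j\<in>UNIV. Q $ i $ j * a u $ i * a v $ j)
      * ?S (J - {u} - {v}))"
    by (simp only: sum_distrib_left sum_distrib_right sum.swap[of _ J UNIV] sum.swap[of _ "J - _" UNIV]
        sum.swap[of _ UNIV "{js. length js = _}"] mult_ac)
  also have "\<dots> = (\<Sum>u\<in>J. \<Sum>v\<in>J - {u}. (a u \<bullet> (Q *v a v)) * ?S (J - {u} - {v}))"
    by (simp add: inner_vec_def matrix_vector_mult_def sum_distrib_left mult_ac)
  also have "\<dots> = (\<Sum>u\<in>J. \<Sum>v\<in>J - {u}. c ^ Suc r * fact (2 * r) * (\<Prod>x\<in>J. w x))"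
  proof (intro sum.cong refl)
    fix u v assume u: "u \<in> J" and v: "v \<in> J - {u}"
    have "(\<Prod>x\<in>J. w x) = w u * w v * (\<Prod>x\<in>J - {u} - {v}. w x)"
      using Suc.prems(2) u v by (simp add: prod.remove mult.assoc)
    then show "(a u \<bullet> (Q *v a v)) * ?S (J - {u} - {v}) = c ^ Suc r * fact (2 * r) * (\<Prod>x\<in>J. w x)"
      using Suc.prems(1) u v by (simp add: IH)
  qed
  also have "\<dots> = c ^ Suc r * fact (2 * Suc r) * (\<Prod>x\<in>J. w x)"
    using Suc.prems by (simp add: card_Diff_singleton_if algebra_simps)
  finally show ?case .
qed simp

lemma contract_sym_prod_Cons:
  assumes "\<And>u v. u \<in> J \<Longrightarrow> v \<in> J \<Longrightarrow> u \<noteq> v \<Longrightarrow> a u \<bullet> (Q *v a v) = c * w u * w v"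
    and "finite J" "card J = Suc (2 * r)"
  shows "(\<Sum>js | length js = 2 * r. tensor_power_entry Q js * sym_prod a J (k # js))
       = c ^ r * fact (2 * r) * (\<Sum>i\<in>J. a i $ k * (\<Prod>u\<in>J - {i}. w u))"
proof -
  have "(\<Sum>js | length js = 2 * r. tensor_power_entry Q js * sym_prod a J (k # js))
      = (\<Sum>i\<in>J. a i $ k * (\<Sum>js | length js = 2 * r. tensor_power_entry Q js * sym_prod a (J - {i}) js))"
    by (simp add: sum_distrib_left sum.swap[of _ J] mult_ac)
  also have "\<dots> = (\<Sum>i\<in>J. a i $ k * (c ^ r * fact (2 * r) * (\<Prod>u\<in>J - {i}. w u)))"
  proof (rule sum.cong[OF refl])
    fix i assume "i \<in> J"
    with assms have "(\<Sum>js | length js = 2 * r. tensor_power_entry Q js * sym_prod a (J - {i}) js)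
        = c ^ r * fact (2 * r) * (\<Prod>u\<in>J - {i}. w u)"
      by (intro contract_sym_prod) auto
    then show "a i $ k * (\<Sum>js | length js = 2 * r. tensor_power_entry Q js * sym_prod a (J - {i}) js)
        = a i $ k * (c ^ r * fact (2 * r) * (\<Prod>u\<in>J - {i}. w u))"
      by simp
  qed
  finally show ?thesis
    by (simp add: sum_distrib_left mult_ac)
qed

lemma sum_times_prod_Diff:
  fixes s :: "'a \<Rightarrow> 'b::field"
  assumes "finite I" "\<forall>i\<in>I. s i \<noteq> 0"
  shows "(\<Sum>i\<in>I. x i * (\<Prod>u\<in>I - {i}. 1 / s u)) = (\<Prod>u\<in>I. 1 / s u) * (\<Sum>i\<in>I. s i * x i)"
  unfolding sum_distrib_left
proof (rule sum.cong[OF refl])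
  fix i assume "i \<in> I"
  then show "x i * (\<Prod>u\<in>I - {i}. 1 / s u) = (\<Prod>u\<in>I. 1 / s u) * (s i * x i)"
    using assms by (simp add: prod.remove)
qed

section \<open>Directional derivatives and mixed partials\<close>

lemma tendsto_at_0_if_dist_le_linear:
  fixes p :: "real \<Rightarrow> 'a::real_normed_vector"
  assumes "\<And>s. dist (p s) x \<le> \<bar>s\<bar> * C"
  shows "(p \<longlongrightarrow> x) (at 0)"
proof -
  have "((\<lambda>s. p s - x) \<longlongrightarrow> 0) (at 0)"
    by (rule Lim_null_comparison[where g = "\<lambda>s. \<bar>s\<bar> * C"])
      (use assms in \<open>auto simp: dist_norm intro!: tendsto_eq_intros\<close>)
  then show ?thesis
    by (simp add: LIM_zero_iff)
qed

lemma MVT_from_0: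
  fixes \<phi> :: "real \<Rightarrow> real"
  assumes "\<And>u. (\<phi> has_real_derivative \<phi>' u) (at u)"
  obtains \<xi> where "\<bar>\<xi>\<bar> \<le> \<bar>b\<bar>" "\<phi> b - \<phi> 0 = b * \<phi>' \<xi>"
proof (cases b "0::real" rule: linorder_cases)
  case less
  with MVT2[OF less, of \<phi> \<phi>'] assms obtain z where "b < z" "z < 0" "\<phi> 0 - \<phi> b = (0 - b) * \<phi>' z"
    by blast
  then show ?thesis by (intro that[of z]) (auto simp: algebra_simps)
next
  case greater
  with MVT2[OF greater, of \<phi> \<phi>'] assms obtain z where "0 < z" "z < b" "\<phi> b - \<phi> 0 = (b - 0) * \<phi>' z"
    by blast
  then show ?thesis by (intro that[of z]) auto
qed (intro that[of 0]; simp)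

lemma DERIV_along_line:
  fixes G :: "'a::real_normed_vector \<Rightarrow> real"
  assumes "\<And>y. ((\<lambda>t. G (y + t *\<^sub>R v)) has_real_derivative DG y) (at 0)"
  shows "((\<lambda>t. G (x + t *\<^sub>R v)) has_real_derivative DG (x + t0 *\<^sub>R v)) (at t0)"
proof -
  have "((\<lambda>u. G (x + (u + t0) *\<^sub>R v)) has_real_derivative DG (x + t0 *\<^sub>R v)) (at 0)"
    using assms[of "x + t0 *\<^sub>R v"] by (simp add: algebra_simps)
  then show ?thesis
    using DERIV_shift[of "\<lambda>t. G (x + t *\<^sub>R v)" _ 0 t0] by simp
qed

lemma DERIV_increment_along:
  fixes G :: "'a::real_normed_vector \<Rightarrow> real"
  assumes der: "\<And>x. ((\<lambda>t. G (x + t *\<^sub>R e)) has_real_derivative DG x) (at 0)"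
    and cont: "isCont DG y"
  shows "((\<lambda>t. G (y + t *\<^sub>R v + (t * c) *\<^sub>R e) - G (y + t *\<^sub>R v)) has_real_derivative c * DG y) (at 0)"
proof -
  \<comment> \<open>By the mean value theorem the increment is \<open>t c DG\<close> at a point within \<open>O(t)\<close> of \<open>y\<close>.\<close>
  have "\<forall>t. \<exists>\<xi>. \<bar>\<xi>\<bar> \<le> \<bar>t * c\<bar> \<and>
      G (y + t *\<^sub>R v + (t * c) *\<^sub>R e) - G (y + t *\<^sub>R v) = t * c * DG (y + t *\<^sub>R v + \<xi> *\<^sub>R e)"
  proof
    fix t
    obtain \<xi> where "\<bar>\<xi>\<bar> \<le> \<bar>t * c\<bar>"
      "G (y + t *\<^sub>R v + (t * c) *\<^sub>R e) - G (y + t *\<^sub>R v + 0 *\<^sub>R e) = t * c * DG (y + t *\<^sub>R v + \<xi> *\<^sub>R e)"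
      by (rule MVT_from_0[of "\<lambda>u. G (y + t *\<^sub>R v + u *\<^sub>R e)"]) (rule DERIV_along_line[OF der])
    then show "\<exists>\<xi>. \<bar>\<xi>\<bar> \<le> \<bar>t * c\<bar> \<and>
      G (y + t *\<^sub>R v + (t * c) *\<^sub>R e) - G (y + t *\<^sub>R v) = t * c * DG (y + t *\<^sub>R v + \<xi> *\<^sub>R e)"
      by auto
  qed
  then obtain \<xi> where \<xi>: "\<And>t. \<bar>\<xi> t\<bar> \<le> \<bar>t * c\<bar>"
    and incr: "\<And>t. G (y + t *\<^sub>R v + (t * c) *\<^sub>R e) - G (y + t *\<^sub>R v) = t * c * DG (y + t *\<^sub>R v + \<xi> t *\<^sub>R e)"
    by (auto dest!: choice)
  have "((\<lambda>t. y + t *\<^sub>R v + \<xi> t *\<^sub>R e) \<longlongrightarrow> y) (at 0)"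
  proof (rule tendsto_at_0_if_dist_le_linear)
    fix t
    have "dist (y + t *\<^sub>R v + \<xi> t *\<^sub>R e) y \<le> \<bar>t\<bar> * norm v + \<bar>\<xi> t\<bar> * norm e"
      using norm_triangle_ineq[of "t *\<^sub>R v" "\<xi> t *\<^sub>R e"] by (simp add: dist_norm add.assoc)
    also have "\<dots> \<le> \<bar>t\<bar> * norm v + \<bar>t * c\<bar> * norm e"
      using \<xi>[of t] by (intro add_left_mono mult_right_mono) auto
    finally show "dist (y + t *\<^sub>R v + \<xi> t *\<^sub>R e) y \<le> \<bar>t\<bar> * (norm v + \<bar>c\<bar> * norm e)"
      by (simp add: abs_mult algebra_simps)
  qed
  then have "((\<lambda>t. c * DG (y + t *\<^sub>R v + \<xi> t *\<^sub>R e)) \<longlongrightarrow> c * DG y) (at 0)"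
    using isCont_tendsto_compose[OF cont] by (auto intro!: tendsto_mult_left)
  then show ?thesis
    unfolding has_field_derivative_iff
    by (rule Lim_transform_eventually) (auto simp: eventually_at_filter incr)
qed

lemma DERIV_along_vector_from_partials:
  fixes G :: "real^'n::finite \<Rightarrow> real" and DG :: "'n \<Rightarrow> real^'n \<Rightarrow> real"
  assumes der: "\<And>i x. ((\<lambda>t. G (x + t *\<^sub>R axis i 1)) has_real_derivative DG i x) (at 0)"
    and cont: "\<And>i. isCont (DG i) y"
  shows "((\<lambda>t. G (y + t *\<^sub>R h)) has_real_derivative (\<Sum>i\<in>UNIV. h $ i * DG i y)) (at 0)"
proof -
  have "((\<lambda>t. G (y + t *\<^sub>R (\<Sum>i\<in>S. h $ i *\<^sub>R axis i 1))) has_real_derivative (\<Sum>i\<in>S. h $ i * DG i y)) (at 0)"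
    if "finite S" for S
    using that
  proof (induction S rule: finite_induct)
    case (insert k S)
    let ?v = "\<Sum>i\<in>S. h $ i *\<^sub>R axis i 1"
    have "((\<lambda>t. (G (y + t *\<^sub>R ?v + (t * h $ k) *\<^sub>R axis k 1) - G (y + t *\<^sub>R ?v)) + G (y + t *\<^sub>R ?v))
        has_real_derivative h $ k * DG k y + (\<Sum>i\<in>S. h $ i * DG i y)) (at 0)"
      by (intro DERIV_add DERIV_increment_along der cont insert.IH)
    then show ?case
      using insert by (simp add: scaleR_add_right algebra_simps)
  qed simp
  from this[of UNIV] show ?thesis
    by (simp add: basis_expansion[of h, unfolded scalar_mult_eq_scaleR])
qed

lemma second_difference_MVT:
  fixes G Gi Gij :: "'a::real_normed_vector \<Rightarrow> real"
  assumes di: "\<And>x. ((\<lambda>t. G (x + t *\<^sub>R ei)) has_real_derivative Gi x) (at 0)"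
    and dij: "\<And>x. ((\<lambda>t. Gi (x + t *\<^sub>R ej)) has_real_derivative Gij x) (at 0)"
  obtains p where "dist p x \<le> \<bar>s\<bar> * (norm ei + norm ej)"
    and "G (x + s *\<^sub>R ei + s *\<^sub>R ej) - G (x + s *\<^sub>R ei) - G (x + s *\<^sub>R ej) + G x = s * s * Gij p"
proof -
  define \<phi> where "\<phi> u = G (x + s *\<^sub>R ej + u *\<^sub>R ei) - G (x + u *\<^sub>R ei)" for u
  have "(\<phi> has_real_derivative Gi (x + s *\<^sub>R ej + u *\<^sub>R ei) - Gi (x + u *\<^sub>R ei)) (at u)" for u
    unfolding \<phi>_def by (intro DERIV_diff DERIV_along_line[where DG = Gi] di)
  then obtain \<xi> where \<xi>: "\<bar>\<xi>\<bar> \<le> \<bar>s\<bar>"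
    and \<phi>: "\<phi> s - \<phi> 0 = s * (Gi (x + s *\<^sub>R ej + \<xi> *\<^sub>R ei) - Gi (x + \<xi> *\<^sub>R ei))"
    by (rule MVT_from_0)
  define \<psi> where "\<psi> v = Gi (x + \<xi> *\<^sub>R ei + v *\<^sub>R ej)" for v
  have "(\<psi> has_real_derivative Gij (x + \<xi> *\<^sub>R ei + v *\<^sub>R ej)) (at v)" for v
    unfolding \<psi>_def by (intro DERIV_along_line[where DG = Gij] dij)
  then obtain \<eta> where \<eta>: "\<bar>\<eta>\<bar> \<le> \<bar>s\<bar>" and \<psi>: "\<psi> s - \<psi> 0 = s * Gij (x + \<xi> *\<^sub>R ei + \<eta> *\<^sub>R ej)"
    by (rule MVT_from_0)
  show ?thesis
  proof
    have "dist (x + \<xi> *\<^sub>R ei + \<eta> *\<^sub>R ej) x \<le> \<bar>\<xi>\<bar> * norm ei + \<bar>\<eta>\<bar> * norm ej"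
      using norm_triangle_ineq[of "\<xi> *\<^sub>R ei" "\<eta> *\<^sub>R ej"] by (simp add: dist_norm)
    also have "\<dots> \<le> \<bar>s\<bar> * (norm ei + norm ej)"
      using \<xi> \<eta> by (simp add: distrib_left add_mono mult_right_mono)
    finally show "dist (x + \<xi> *\<^sub>R ei + \<eta> *\<^sub>R ej) x \<le> \<bar>s\<bar> * (norm ei + norm ej)" .
    have "G (x + s *\<^sub>R ei + s *\<^sub>R ej) - G (x + s *\<^sub>R ei) - G (x + s *\<^sub>R ej) + G x = \<phi> s - \<phi> 0"
      by (simp add: \<phi>_def algebra_simps)
    also have "\<dots> = s * (\<psi> s - \<psi> 0)"
      using \<phi> by (simp add: \<psi>_def algebra_simps)
    finally show "G (x + s *\<^sub>R ei + s *\<^sub>R ej) - G (x + s *\<^sub>R ei) - G (x + s *\<^sub>R ej) + G x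
        = s * s * Gij (x + \<xi> *\<^sub>R ei + \<eta> *\<^sub>R ej)"
      using \<psi> by simp
  qed
qed

lemma mixed_partials_commute:
  fixes G Gi Gj Gij Gji :: "'a::real_normed_vector \<Rightarrow> real"
  assumes di: "\<And>x. ((\<lambda>t. G (x + t *\<^sub>R ei)) has_real_derivative Gi x) (at 0)"
    and dj: "\<And>x. ((\<lambda>t. G (x + t *\<^sub>R ej)) has_real_derivative Gj x) (at 0)"
    and dij: "\<And>x. ((\<lambda>t. Gi (x + t *\<^sub>R ej)) has_real_derivative Gij x) (at 0)"
    and dji: "\<And>x. ((\<lambda>t. Gj (x + t *\<^sub>R ei)) has_real_derivative Gji x) (at 0)"
    and "isCont Gij x" "isCont Gji x"
  shows "Gij x = Gji x"
proof -
  \<comment> \<open>Both mixed partials at \<open>x\<close> are limits of the same second difference \<open>\<Delta> s / s\<^sup>2\<close>.\<close>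
  define C where "C = norm ei + norm ej"
  define \<Delta> where "\<Delta> s = G (x + s *\<^sub>R ei + s *\<^sub>R ej) - G (x + s *\<^sub>R ei) - G (x + s *\<^sub>R ej) + G x" for s
  have "\<forall>s. \<exists>p. dist p x \<le> \<bar>s\<bar> * C \<and> \<Delta> s = s * s * Gij p"
    using second_difference_MVT[OF di dij] unfolding C_def \<Delta>_def by metis
  then obtain p where p: "\<And>s. dist (p s) x \<le> \<bar>s\<bar> * C" "\<And>s. \<Delta> s = s * s * Gij (p s)"
    by (auto dest!: choice)
  have "\<Delta> s = G (x + s *\<^sub>R ej + s *\<^sub>R ei) - G (x + s *\<^sub>R ej) - G (x + s *\<^sub>R ei) + G x" for s
    by (simp add: \<Delta>_def add_ac)
  then have "\<forall>s. \<exists>p. dist p x \<le> \<bar>s\<bar> * C \<and> \<Delta> s = s * s * Gji p"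
    using second_difference_MVT[OF dj dji] unfolding C_def by (metis add.commute)
  then obtain p' where p': "\<And>s. dist (p' s) x \<le> \<bar>s\<bar> * C" "\<And>s. \<Delta> s = s * s * Gji (p' s)"
    by (auto dest!: choice)
  have "((\<lambda>s. Gij (p s)) \<longlongrightarrow> Gij x) (at 0)"
    using isCont_tendsto_compose[OF \<open>isCont Gij x\<close> tendsto_at_0_if_dist_le_linear[OF p(1)]] .
  moreover have "((\<lambda>s. Gij (p s)) \<longlongrightarrow> Gji x) (at 0)"
  proof (rule Lim_transform_eventually)
    show "((\<lambda>s. Gji (p' s)) \<longlongrightarrow> Gji x) (at 0)"
      using isCont_tendsto_compose[OF \<open>isCont Gji x\<close> tendsto_at_0_if_dist_le_linear[OF p'(1)]] .
    show "\<forall>\<^sub>F s in at 0. Gji (p' s) = Gij (p s)"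
      using p(2) p'(2) unfolding eventually_at_filter by (auto intro!: always_eventually)
  qed
  ultimately show ?thesis
    by (rule tendsto_unique[OF at_neq_bot])
qed

section \<open>The derivative tensors of a smooth function\<close>

declare ipdiff.simps(2)[simp del]

lemma Ck_partials_DERIV:
  "Ck_partials k f \<Longrightarrow> length js < k \<Longrightarrow>
    ((\<lambda>t. ipdiff js f (x + t *\<^sub>R axis i 1)) has_real_derivative ipdiff (i # js) f x) (at 0)"
  unfolding Ck_partials_def by blast

lemma Ck_partials_isCont:
  "Ck_partials k f \<Longrightarrow> length js \<le> k \<Longrightarrow> isCont (ipdiff js f) x"
  unfolding Ck_partials_def by (simp add: continuous_on_eq_continuous_at)

lemma ipdiff_swap:
  assumes "Ck_partials k f" "length js + 2 \<le> k"
  shows "ipdiff (i # j # js) f x = ipdiff (j # i # js) f x"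
  using assms
  by (intro mixed_partials_commute[where G = "ipdiff js f" and ei = "axis j 1" and ej = "axis i 1"])
    (auto intro: Ck_partials_DERIV Ck_partials_isCont)

lemma symmetric_tensor_ipdiff:
  assumes "Ck_partials k f" "n \<le> k"
  shows "symmetric_tensor n (\<lambda>js. ipdiff js f x)"
  unfolding symmetric_tensor_def
proof (intro allI impI)
  fix xs ys :: "'a list"
  assume "length xs = n" "mset xs = mset ys"
  have "ipdiff xs f = ipdiff ys f"
  proof (rule mset_eq_imp_eq_if_swap_invariant[where F = "\<lambda>js. ipdiff js f" and N = k])
    show "ipdiff (i # js) f = pdiff i (ipdiff js f)" for i js
      by (simp add: ipdiff.simps)
    show "ipdiff (i # j # js) f = ipdiff (j # i # js) f" if "length js + 2 \<le> k" for i j js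
      using ipdiff_swap[OF assms(1) that] by blast
  qed (use assms \<open>length xs = n\<close> \<open>mset xs = mset ys\<close> in auto)
  then show "ipdiff xs f x = ipdiff ys f x" by simp
qed

lemma pdiff_sum_ipdiff:
  assumes "Ck_partials k f" "finite A" "\<forall>js\<in>A. length (p js) < k"
  shows "pdiff i (\<lambda>x. \<Sum>js\<in>A. w js * ipdiff (p js) f x) = (\<lambda>x. \<Sum>js\<in>A. w js * ipdiff (i # p js) f x)"
  unfolding pdiff_def using assms
  by (intro ext DERIV_imp_deriv DERIV_sum DERIV_cmult Ck_partials_DERIV) auto

lemma deriv_along_line_eq_sum_ipdiff:
  assumes "Ck_partials k f" "r \<le> k"
  shows "(deriv ^^ r) (\<lambda>t. f (x + t *\<^sub>R h))
       = (\<lambda>t. \<Sum>js | length js = r. coord_prod h js * ipdiff js f (x + t *\<^sub>R h))"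
  using assms(2)
proof (induction r)
  case (Suc r)
  have "((\<lambda>t. ipdiff js f (x + t *\<^sub>R h)) has_real_derivative
      (\<Sum>i\<in>UNIV. h $ i * ipdiff (i # js) f (x + t *\<^sub>R h))) (at t)" if "length js = r" for js t
    by (rule DERIV_along_line[where DG = "\<lambda>y. \<Sum>i\<in>UNIV. h $ i * ipdiff (i # js) f y"],
        rule DERIV_along_vector_from_partials)
      (use assms(1) Suc.prems that in \<open>auto intro: Ck_partials_DERIV Ck_partials_isCont\<close>)
  then have "((\<lambda>t. \<Sum>js | length js = r. coord_prod h js * ipdiff js f (x + t *\<^sub>R h)) has_real_derivative
      (\<Sum>js | length js = r. coord_prod h js * (\<Sum>i\<in>UNIV. h $ i * ipdiff (i # js) f (x + t *\<^sub>R h)))) (at t)"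
    for t
    by (intro DERIV_sum DERIV_cmult) auto
  then have "deriv (\<lambda>t. \<Sum>js | length js = r. coord_prod h js * ipdiff js f (x + t *\<^sub>R h))
      = (\<lambda>t. \<Sum>js | length js = Suc r. coord_prod h js * ipdiff js f (x + t *\<^sub>R h))"
    by (intro ext DERIV_imp_deriv)
      (simp add: sum_length_Suc sum_distrib_left sum.swap[of _ UNIV "{js. length js = _}"] mult_ac)
  with Suc show ?case by simp
qed simp

lemma QLap_power_eq_sum_ipdiff:
  assumes "Ck_partials k f" "2 * r < k"
  shows "(QLap Q ^^ r) f x = (\<Sum>js | length js = 2 * r. tensor_power_entry Q js * ipdiff js f x)"
  using assms(2)
proof (induction r arbitrary: x)
  case (Suc r)
  have "(QLap Q ^^ r) f = (\<lambda>x. \<Sum>js | length js = 2 * r. tensor_power_entry Q js * ipdiff js f x)"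
    using Suc by fastforce
  then have "(QLap Q ^^ Suc r) f x = QLap Q (\<lambda>x. \<Sum>js | length js = 2 * r. tensor_power_entry Q js * ipdiff js f x) x"
    by simp
  also have "\<dots> = (\<Sum>i\<in>UNIV. \<Sum>j\<in>UNIV. Q $ i $ j *
      (\<Sum>js | length js = 2 * r. tensor_power_entry Q js * ipdiff (i # j # js) f x))"
    using Suc.prems
    by (simp add: QLap_def pdiff_sum_ipdiff[OF assms(1) finite_list_length, where p = "\<lambda>js. js"]
        pdiff_sum_ipdiff[OF assms(1) finite_list_length, where p = "\<lambda>js. j # js" for j])
  finally show ?case
    by (simp add: sum_length_Suc sum_distrib_left mult_ac)
qed simp

lemma bias_vec_eq_sum_ipdiff:
  assumes "Ck_partials (q + 1) f" "even q"
  shows "bias_vec Q q f x $ k = (\<Sum>js | length js = q. tensor_power_entry Q js * ipdiff (k # js) f x)"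
proof -
  have "(QLap Q ^^ (q div 2)) f = (\<lambda>x. \<Sum>js | length js = q. tensor_power_entry Q js * ipdiff js f x)"
    using QLap_power_eq_sum_ipdiff[OF assms(1), of "q div 2"] assms(2) by fastforce
  then show ?thesis
    by (simp add: bias_vec_def pdiff_sum_ipdiff[OF assms(1) finite_list_length, where p = "\<lambda>js. js"])
qed

lemma ipdiff_eq_sym_prod:
  assumes "Ck_partials n f" "finite I" "card I = n"
    and taylor: "\<And>h. (deriv ^^ n) (\<lambda>t. f (x + t *\<^sub>R h)) 0 / fact n = (\<Prod>i\<in>I. a i \<bullet> h)"
    and "length js = n"
  shows "ipdiff js f x = sym_prod a I js"
proof -
  have form_eq_0: "(\<Sum>js | length js = n. (ipdiff js f x - sym_prod a I js) * coord_prod h js) = 0" for h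
  proof -
    have "(\<Sum>js | length js = n. coord_prod h js * ipdiff js f x) = fact n * (\<Prod>i\<in>I. a i \<bullet> h)"
      using deriv_along_line_eq_sum_ipdiff[OF assms(1) order.refl, of x h] taylor[of h]
      by (simp add: field_simps)
    then show ?thesis
      using sym_prod_form[OF assms(2,3), of h a] by (simp add: algebra_simps sum_subtractf)
  qed
  have "symmetric_tensor n (\<lambda>js. ipdiff js f x - sym_prod a I js)"
    using assms(1) by (intro symmetric_tensor_diff symmetric_tensor_ipdiff symmetric_tensor_sym_prod) auto
  from symmetric_tensor_eq_0[OF this form_eq_0 assms(5)] show ?thesis by simp
qed

section \<open>An equiangular configuration\<close>

lemma independent_if_dim_span_eq_card:
  fixes a :: "nat \<Rightarrow> 'a::euclidean_space"
  assumes "dim (span (a ` {1..q+1})) = q" "a (q+1) \<in> span (a ` {1..q})"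
  shows "independent (a ` {1..q})" "inj_on a {1..q}"
proof -
  have "span (a ` {1..q+1}) = span (a ` {1..q})"
    using assms(2) by (simp add: atLeastAtMostSuc_conv image_insert span_redundant)
  then have dim: "dim (span (a ` {1..q})) = q"
    using assms(1) by simp
  moreover have "card (a ` {1..q}) \<le> q"
    using card_image_le[of "{1..q}" a] by simp
  ultimately show ind: "independent (a ` {1..q})"
    by (intro card_le_dim_spanning[of _ "span (a ` {1..q})"]) (auto intro: span_base)
  show "inj_on a {1..q}"
    using dim dim_span_eq_card_independent[OF ind] by (intro eq_card_imp_inj_on) auto
qed

lemma linear_inj_Gram_form:
  fixes U :: "'a::real_inner"
  assumes "U \<noteq> 0"
  obtains W :: "'a \<Rightarrow> 'a" where "linear W" "inj W"
    "\<And>x y. W x \<bullet> W y = (1 + U \<bullet> U) * (x \<bullet> y) - (U \<bullet> x) * (U \<bullet> y)"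
proof
  define \<beta> where "\<beta> = sqrt (1 + U \<bullet> U)"
  define \<gamma> where "\<gamma> = (\<beta> - 1) / (U \<bullet> U)"
  define W where "W x = \<beta> *\<^sub>R x - (\<gamma> * (U \<bullet> x)) *\<^sub>R U" for x
  have UU: "U \<bullet> U > 0"
    using assms by simp
  have \<beta>: "\<beta> * \<beta> = 1 + U \<bullet> U" "\<beta> > 0"
    using UU by (simp_all add: \<beta>_def add_pos_nonneg)
  have "\<gamma> * \<gamma> * (U \<bullet> U) - 2 * \<gamma> * \<beta> = - (\<beta> * \<beta> - 1) / (U \<bullet> U)"
    using UU by (simp add: \<gamma>_def field_simps power2_eq_square)
  also have "\<dots> = -1"
    using UU \<beta>(1) by simp
  finally have \<gamma>: "\<gamma> * \<gamma> * (U \<bullet> U) - 2 * \<gamma> * \<beta> = -1" .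
  show "W x \<bullet> W y = (1 + U \<bullet> U) * (x \<bullet> y) - (U \<bullet> x) * (U \<bullet> y)" for x y
  proof -
    have "W x \<bullet> W y = \<beta> * \<beta> * (x \<bullet> y) + (U \<bullet> x) * (U \<bullet> y) * (\<gamma> * \<gamma> * (U \<bullet> U) - 2 * \<gamma> * \<beta>)"
      unfolding W_def by (simp add: inner_diff_left inner_diff_right inner_commute algebra_simps)
    then show ?thesis
      using \<gamma> \<beta>(1) by simp
  qed
  have "linear W"
    unfolding W_def by (auto simp: linear_iff inner_add_right algebra_simps)
  then show "linear W" .
  show "inj W"
    unfolding linear_injective_0[OF \<open>linear W\<close>]
  proof (intro allI impI)
    fix z assume "W z = 0"
    moreover have "U \<bullet> W z = U \<bullet> z"
      using UU by (simp add: W_def \<gamma>_def inner_diff_right field_simps)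
    ultimately have "\<beta> *\<^sub>R z = 0"
      by (simp add: W_def)
    then show "z = 0"
      using \<beta>(2) by simp
  qed
qed

lemma regular_simplex_exists:
  assumes "1 \<le> q" "q \<le> CARD('n::finite)"
  obtains v :: "nat \<Rightarrow> real^'n"
  where "independent (v ` {1..q})" "inj_on v {1..q}" "(\<Sum>u=1..q+1. v u) = 0"
    and "\<And>u w. u \<in> {1..q+1} \<Longrightarrow> w \<in> {1..q+1} \<Longrightarrow> u \<noteq> w \<Longrightarrow> v u \<bullet> v w = -1"
proof -
  obtain \<iota> :: "nat \<Rightarrow> 'n" where \<iota>: "inj_on \<iota> {1..q}"
    using card_le_inj[of "{1..q}" "UNIV :: 'n set"] assms(2) by auto
  define e where "e u = (axis (\<iota> u) 1 :: real^'n)" for u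
  define U where "U = (\<Sum>u=1..q. e u)"
  have ee: "e u \<bullet> e w = (if u = w then 1 else 0)" if "u \<in> {1..q}" "w \<in> {1..q}" for u w
    using \<iota> that by (auto simp: e_def inner_axis_axis inj_on_eq_iff)
  have Ue: "U \<bullet> e u = 1" if "u \<in> {1..q}" for u
    using that by (simp add: U_def inner_sum_left ee if_distrib cong: if_cong)
  have UU: "U \<bullet> U = q"
    by (subst (2) U_def) (simp add: inner_sum_right Ue)
  then have "U \<noteq> 0"
    using assms(1) by auto
  \<comment> \<open>Under this Gram form \<open>e 1, \<dots>, e q, -U\<close> have pairwise inner products \<open>-1\<close>.\<close>
  obtain W :: "real^'n \<Rightarrow> real^'n" where W: "linear W" "inj W"
    and WW: "\<And>x y. W x \<bullet> W y = (1 + U \<bullet> U) * (x \<bullet> y) - (U \<bullet> x) * (U \<bullet> y)"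
    using linear_inj_Gram_form[OF \<open>U \<noteq> 0\<close>] by blast
  define E where "E u = (if u \<le> q then e u else - U)" for u
  have "inj_on e {1..q}"
  proof (rule inj_onI)
    fix u w assume "u \<in> {1..q}" "w \<in> {1..q}" "e u = e w"
    then show "u = w"
      using \<iota> by (simp add: e_def axis_eq_axis inj_on_eq_iff)
  qed
  then have "inj_on (W \<circ> e) {1..q}"
    using W(2) by (metis comp_inj_on inj_on_subset subset_UNIV)
  moreover have "inj_on (\<lambda>u. W (E u)) {1..q} = inj_on (W \<circ> e) {1..q}"
    by (rule inj_on_cong) (simp add: E_def)
  moreover have "independent (e ` {1..q})"
    using ee by (intro pairwise_orthogonal_independent) (force simp: pairwise_def orthogonal_def)+
  then have "independent (W ` e ` {1..q})"
    using W by (metis linear_independent_injective_image inj_on_subset subset_UNIV)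
  moreover have "(\<lambda>u. W (E u)) ` {1..q} = W ` e ` {1..q}"
    by (auto simp: E_def image_iff)
  ultimately show ?thesis
  proof (intro that)
    show "(\<Sum>u=1..q+1. W (E u)) = 0"
      using linear_sum[OF W(1), of e "{1..q}"] linear_neg[OF W(1), of U]
      by (simp add: E_def U_def)
    fix u w assume "u \<in> {1..q+1}" "w \<in> {1..q+1}" "u \<noteq> w"
    then consider "u \<le> q" "w \<le> q" | "u \<le> q" "w = q+1" | "u = q+1" "w \<le> q"
      by fastforce
    then show "W (E u) \<bullet> W (E w) = -1"
      using \<open>u \<in> _\<close> \<open>w \<in> _\<close> \<open>u \<noteq> w\<close>
      by cases (simp_all add: WW E_def ee Ue UU inner_commute)
  qed simp_all
qed

lemma span_image_scaleR:
  assumes "\<And>u. u \<in> I \<Longrightarrow> s u \<noteq> 0"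
  shows "span ((\<lambda>u. s u *\<^sub>R a u) ` I) = span (a ` I)"
proof (rule span_eq[THEN iffD2], intro conjI subsetI)
  fix x assume "x \<in> (\<lambda>u. s u *\<^sub>R a u) ` I"
  then show "x \<in> span (a ` I)"
    by (auto intro: span_mul span_base)
next
  fix x assume "x \<in> a ` I"
  then obtain u where u: "u \<in> I" "x = a u"
    by auto
  then have "s u *\<^sub>R a u \<in> span ((\<lambda>u. s u *\<^sub>R a u) ` I)"
    by (intro span_base) auto
  from span_mul[OF this, of "1 / s u"] show "x \<in> span ((\<lambda>u. s u *\<^sub>R a u) ` I)"
    using assms u by simp
qed

lemma linear_inj_extension_indexed:
  fixes b v :: "'i \<Rightarrow> 'a::euclidean_space"
  assumes "independent (b ` I)" "inj_on b I" "independent (v ` I)" "inj_on v I"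
  obtains g :: "'a \<Rightarrow> 'a" where "linear g" "inj g" "\<And>u. u \<in> I \<Longrightarrow> g (b u) = v u"
proof -
  define f where "f = v \<circ> inv_into I b"
  have "f ` b ` I = v ` I" and inj_f: "inj_on f (b ` I)"
    using assms(2,4) by (auto simp: f_def image_comp intro!: comp_inj_on inj_on_inv_into)
  with assms(3) have "independent (f ` b ` I)"
    by simp
  from linear_independent_extend_inj[OF assms(1) this inj_f]
  obtain g where "linear g" "inj g" and g: "\<And>x. x \<in> b ` I \<Longrightarrow> g x = f x"
    by blast
  moreover have "g (b u) = v u" if "u \<in> I" for u
    using g[of "b u"] that assms(2) by (simp add: f_def)
  ultimately show ?thesis
    using that by blast
qed

lemma linear_map_onto_regular_simplex:
  fixes a :: "nat \<Rightarrow> real^'n::finite" and s :: "nat \<Rightarrow> real"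
  assumes "1 \<le> q" "q \<le> CARD('n)" "dim (span (a ` {1..q+1})) = q"
    and rel: "(\<Sum>i=1..q+1. s i *\<^sub>R a i) = 0" and s: "\<And>i. i \<in> {1..q+1} \<Longrightarrow> s i \<noteq> 0"
  obtains g :: "real^'n \<Rightarrow> real^'n" where "linear g" "inj g"
    "\<And>u w. u \<in> {1..q+1} \<Longrightarrow> w \<in> {1..q+1} \<Longrightarrow> u \<noteq> w \<Longrightarrow> g (a u) \<bullet> g (a w) = - (1 / s u) * (1 / s w)"
proof -
  define b where "b u = s u *\<^sub>R a u" for u
  have b_last: "b (q+1) = - (\<Sum>u=1..q. b u)"
    using rel by (simp add: b_def eq_neg_iff_add_eq_0 add.commute)
  have "span (b ` {1..q+1}) = span (a ` {1..q+1})"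
    unfolding b_def by (rule span_image_scaleR) (rule s)
  then have "dim (span (b ` {1..q+1})) = q"
    using assms(3) by metis
  moreover have "b (q+1) \<in> span (b ` {1..q})"
    unfolding b_last by (intro span_neg span_sum span_base) auto
  ultimately have ind_b: "independent (b ` {1..q})" and inj_b: "inj_on b {1..q}"
    by (rule independent_if_dim_span_eq_card)+
  obtain v :: "nat \<Rightarrow> real^'n" where ind_v: "independent (v ` {1..q})" and inj_v: "inj_on v {1..q}"
    and v_sum: "(\<Sum>u=1..q+1. v u) = 0"
    and v_inner: "\<And>u w. u \<in> {1..q+1} \<Longrightarrow> w \<in> {1..q+1} \<Longrightarrow> u \<noteq> w \<Longrightarrow> v u \<bullet> v w = -1"
    using regular_simplex_exists[OF assms(1,2)] by blast
  obtain g where g: "linear g" "inj g" and gb_init: "\<And>u. u \<in> {1..q} \<Longrightarrow> g (b u) = v u"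
    using linear_inj_extension_indexed[OF ind_b inj_b ind_v inj_v] by blast
  have gb: "g (b u) = v u" if "u \<in> {1..q+1}" for u
  proof (cases "u \<le> q")
    case True
    with that show ?thesis by (simp add: gb_init)
  next
    case False
    then have "u = q + 1" using that by simp
    moreover have "g (b (q+1)) = - (\<Sum>u=1..q. g (b u))"
      unfolding b_last by (simp add: linear_neg[OF g(1)] linear_sum[OF g(1)])
    moreover have "(\<Sum>u=1..q. g (b u)) = (\<Sum>u=1..q. v u)"
      by (intro sum.cong) (simp_all add: gb_init)
    moreover have "v (q+1) = - (\<Sum>u=1..q. v u)"
      using v_sum by (simp add: eq_neg_iff_add_eq_0 add.commute)
    ultimately show ?thesis
      by simp
  qed
  have "g (a u) = (1 / s u) *\<^sub>R v u" if "u \<in> {1..q+1}" for u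
  proof -
    have "v u = s u *\<^sub>R g (a u)"
      using gb[OF that] by (simp add: b_def linear_cmul[OF g(1)])
    then show ?thesis
      using s[OF that] by simp
  qed
  with v_inner show ?thesis
    by (intro that[OF g(1,2)]) simp
qed

lemma det_scaleR:
  fixes A :: "real^'n::finite^'n"
  shows "det (c *\<^sub>R A) = c ^ CARD('n) * det A"
proof -
  have "(\<Prod>i\<in>UNIV. c * A $ i $ p i) = c ^ CARD('n) * (\<Prod>i\<in>UNIV. A $ i $ p i)" for p :: "'n \<Rightarrow> 'n"
    by (simp add: prod.distrib)
  then show ?thesis
    by (simp add: det_def sum_distrib_left mult_ac)
qed

lemma matrix_inv_inverse:
  fixes M :: "real^'n::finite^'n"
  assumes "invertible M"
  shows "M ** matrix_inv M = mat 1" "matrix_inv M ** M = mat 1"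
  using someI_ex[OF assms[unfolded invertible_def]] by (simp_all add: matrix_inv_def)

lemma matrix_inv_matrix_inv:
  fixes M :: "real^'n::finite^'n"
  assumes "invertible M"
  shows "matrix_inv (matrix_inv M) = M"
  unfolding matrix_inv_def[of "matrix_inv M"]
proof (rule some_equality)
  show "matrix_inv M ** M = mat 1 \<and> M ** matrix_inv M = mat 1"
    using matrix_inv_inverse[OF assms] by simp
  fix M' assume M': "matrix_inv M ** M' = mat 1 \<and> M' ** matrix_inv M = mat 1"
  have "M' = M' ** (matrix_inv M ** M)"
    using matrix_inv_inverse[OF assms] by (simp add: matrix_mul_rid)
  also have "\<dots> = M"
    using M' by (simp add: matrix_mul_assoc matrix_mul_lid)
  finally show "M' = M" .
qed

lemma unimodular_Gram_factor:
  fixes N :: "real^'n::finite^'n"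
  assumes "invertible N"
  obtains P :: "real^'n^'n" and c where "\<bar>det P\<bar> = 1"
    "\<And>x y. x \<bullet> ((matrix_inv P ** transpose (matrix_inv P)) *v y) = c * ((N *v x) \<bullet> (N *v y))"
proof -
  have detN: "det N \<noteq> 0"
    using assms invertible_det_nz by blast
  define r where "r = inverse (root CARD('n) \<bar>det N\<bar>)"
  define M where "M = transpose (r *\<^sub>R N)"
  have "r ^ CARD('n) = inverse \<bar>det N\<bar>"
    by (simp add: r_def power_inverse real_root_pow_pos2)
  then have detM: "\<bar>det M\<bar> = 1"
    using detN by (simp add: M_def det_transpose det_scaleR abs_mult)
  then have invM: "invertible M"
    by (simp add: invertible_det_nz)
  show ?thesis
  proof
    have "det (matrix_inv M ** M) = 1"
      using matrix_inv_inverse(2)[OF invM] by simp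
    then show "\<bar>det (matrix_inv M)\<bar> = 1"
      using detM by (metis abs_1 abs_mult det_mul mult.right_neutral)
    fix x y :: "real^'n"
    have "x \<bullet> ((M ** transpose M) *v y) = (x v* M) \<bullet> (transpose M *v y)"
      by (simp only: matrix_vector_mul_assoc[symmetric] dot_lmul_matrix)
    also have "\<dots> = (r * r) * ((N *v x) \<bullet> (N *v y))"
      by (simp add: M_def scaleR_matrix_vector_assoc[symmetric])
    finally show "x \<bullet> ((matrix_inv (matrix_inv M) ** transpose (matrix_inv (matrix_inv M))) *v y)
        = (r * r) * ((N *v x) \<bullet> (N *v y))"
      by (simp add: matrix_inv_matrix_inv[OF invM])
  qed
qed

lemma exists_unimodular_equiangular_form:
  fixes a :: "nat \<Rightarrow> real^'n::finite" and s :: "nat \<Rightarrow> real"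
  assumes "1 \<le> q" "q \<le> CARD('n)" "dim (span (a ` {1..q+1})) = q"
    and "(\<Sum>i=1..q+1. s i *\<^sub>R a i) = 0" "\<And>i. i \<in> {1..q+1} \<Longrightarrow> s i \<noteq> 0"
  obtains P :: "real^'n^'n" and c where "\<bar>det P\<bar> = 1"
    "\<And>u w. u \<in> {1..q+1} \<Longrightarrow> w \<in> {1..q+1} \<Longrightarrow> u \<noteq> w \<Longrightarrow>
       a u \<bullet> ((matrix_inv P ** transpose (matrix_inv P)) *v a w) = c * (1 / s u) * (1 / s w)"
proof -
  obtain g :: "real^'n \<Rightarrow> real^'n" where g: "linear g" "inj g"
    and g_inner: "\<And>u w. u \<in> {1..q+1} \<Longrightarrow> w \<in> {1..q+1} \<Longrightarrow> u \<noteq> w \<Longrightarrow>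
      g (a u) \<bullet> g (a w) = - (1 / s u) * (1 / s w)"
    using linear_map_onto_regular_simplex[OF assms] by blast
  have gN: "matrix g *v x = g x" for x
    by (metis matrix_vector_mul(2)[OF g(1)])
  have "invertible (matrix g)"
    using g(2) by (simp add: invertible_left_inverse matrix_left_invertible_injective inj_def gN)
  then obtain P :: "real^'n^'n" and c where "\<bar>det P\<bar> = 1"
    and "\<And>x y. x \<bullet> ((matrix_inv P ** transpose (matrix_inv P)) *v y) = c * ((matrix g *v x) \<bullet> (matrix g *v y))"
    using unimodular_Gram_factor by blast
  with g_inner show ?thesis
    by (intro that[of P "- c"]) (simp_all add: gN)
qed

section \<open>Vanishing of the bias\<close>

lemma bias_vec_eq_0_if_equiangular:
  fixes f :: "real^'n::finite \<Rightarrow> real" and a :: "nat \<Rightarrow> real^'n" and s :: "nat \<Rightarrow> real"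
  assumes smooth: "Ck_partials (q + 1) f" and "even q"
    and taylor: "\<And>h. (deriv ^^ (q + 1)) (\<lambda>t. f (\<theta> + t *\<^sub>R h)) 0 / fact (q + 1) = (\<Prod>i = 1..q + 1. a i \<bullet> h)"
    and form: "\<And>u w. u \<in> {1..q+1} \<Longrightarrow> w \<in> {1..q+1} \<Longrightarrow> u \<noteq> w \<Longrightarrow>
       a u \<bullet> (Q *v a w) = c * (1 / s u) * (1 / s w)"
    and rel: "(\<Sum>i = 1..q + 1. s i *\<^sub>R a i) = 0" and s: "\<And>i. i \<in> {1..q+1} \<Longrightarrow> s i \<noteq> 0"
  shows "bias_vec Q q f \<theta> = 0"
proof -
  have tensor: "ipdiff (k # js) f \<theta> = sym_prod a {1..q+1} (k # js)" if "length js = q" for k js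
    using that taylor by (intro ipdiff_eq_sym_prod[OF smooth]) auto
  obtain m where q: "q = 2 * m"
    using \<open>even q\<close> by blast
  have "bias_vec Q q f \<theta> $ k = 0" for k
  proof -
    have "bias_vec Q q f \<theta> $ k = (\<Sum>js | length js = q. tensor_power_entry Q js * ipdiff (k # js) f \<theta>)"
      by (rule bias_vec_eq_sum_ipdiff[OF smooth \<open>even q\<close>])
    also have "\<dots> = (\<Sum>js | length js = 2 * m. tensor_power_entry Q js * sym_prod a {1..q+1} (k # js))"
      unfolding q by (intro sum.cong refl) (simp add: tensor q)
    also have "\<dots> = c ^ m * fact (2 * m) * (\<Sum>i\<in>{1..q+1}. a i $ k * (\<Prod>u\<in>{1..q+1} - {i}. 1 / s u))"
      using form q by (intro contract_sym_prod_Cons) auto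
    also have "\<dots> = 0"
    proof -
      have "(\<Sum>i=1..q+1. s i * a i $ k) = 0"
        using arg_cong[OF rel, of "\<lambda>v. v $ k"] by (simp add: sum_component)
      then show ?thesis
        using s by (subst sum_times_prod_Diff) auto
    qed
    finally show ?thesis .
  qed
  then show ?thesis
    by (simp add: vec_eq_iff)
qed

theorem proposition3:
  fixes f :: "real^'n \<Rightarrow> real" and \<theta> :: "real^'n"
    and q :: nat and a :: "nat \<Rightarrow> real^'n" and s :: "nat \<Rightarrow> real"
  assumes q_even: "even q" and q_ge: "q \<ge> 2" and d_ge: "CARD('n) \<ge> q"
    and density: "\<forall>x. 0 \<le> f x" "(f has_integral 1) UNIV"
    and mode: "\<forall>x. f x \<le> f \<theta>"
    and smooth: "Ck_partials (q + 1) f"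
    and hess_inv: "invertible (hessian f \<theta>)"
    and taylor: "\<forall>h. (deriv ^^ (q + 1)) (\<lambda>t. f (\<theta> + t *\<^sub>R h)) 0 / fact (q + 1)
                     = (\<Prod>i = 1..q + 1. a i \<bullet> h)"
    and span_dim: "dim (span (a ` {1..q + 1})) = q"
    and lin_rel: "(\<Sum>i = 1..q + 1. s i *\<^sub>R a i) = 0"
    and s_nz: "(\<Prod>i = 1..q + 1. s i) \<noteq> 0"
  shows "\<exists>P :: real^'n^'n. \<bar>det P\<bar> = 1 \<and>
           bias_vec (matrix_inv P ** transpose (matrix_inv P)) q f \<theta> = 0"
proof -
  \<comment> \<open>\<open>density\<close>, \<open>mode\<close> and \<open>hess_inv\<close> only justify the asymptotic bias formula; the vanishing
    of the bias vector needs just the Taylor term and the linear relation.\<close>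
  have s: "s i \<noteq> 0" if "i \<in> {1..q+1}" for i
    using s_nz that by (metis finite_atLeastAtMost prod_zero_iff)
  have "1 \<le> q"
    using q_ge by simp
  obtain P :: "real^'n^'n" and c where "\<bar>det P\<bar> = 1"
    and "\<And>u w. u \<in> {1..q+1} \<Longrightarrow> w \<in> {1..q+1} \<Longrightarrow> u \<noteq> w \<Longrightarrow>
       a u \<bullet> ((matrix_inv P ** transpose (matrix_inv P)) *v a w) = c * (1 / s u) * (1 / s w)"
    using exists_unimodular_equiangular_form[OF \<open>1 \<le> q\<close> d_ge span_dim lin_rel s] by blast
  with q_even smooth taylor lin_rel s show ?thesis
    by (blast intro: bias_vec_eq_0_if_equiangular)
qed

end
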